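(* Let $1\le p\le 2$, let $X$ and $Y$ be Banach spaces such that $X$ has type $p$, and let $u:X\to Y$ be a continuous linear operator. If $(u(x_i))_{i=1}^\infty\in\ell_p\langle Y\rangle$ for every $(x_i)_{i=1}^\infty\in Rad(X)$, then $u^*:Y^*\to X^*$ is absolutely $p^*$-summing (equivalently, $u$ is Cohen strongly $p$-summing), where $\frac1p+\frac1{p^*}=1$.
   Context: $r_i$ denote the Rademacher functions. $Rad(X)$ is the space of sequences $(x_i)\subset X$ with $\left(\int_0^1\left\|\sum_{i=1}^\infty r_i(t)x_i\right\|^2dt\right)^{1/2}<\infty$. $X$ has type $p$ if there is $C\ge0$ with $\left(\int_0^1\left\|\sum_{i=1}^m r_i(t)x_i\right\|^2dt\right)^{1/2}\le C\left(\sum_{i=1}^m\|x_i\|^p\right)^{1/p}$ for all finite families in $X$. For $1\le s\le\infty$, $\ell_s^w(E)$ is the space of sequences with $\sup_{x^*\in B_{E^*}}\|(x^*(x_i))_i\|_s<\infty$, and $\ell_s(E)$ the space of sequences with $(\|x_i\|)_i\in\ell_s$. $\ell_p\langle Y\rangle$ is the space of sequences $(y_i)\subset Y$ with $\sup\{\sum_i|y_i^*(y_i)|:(y_i^* )\in B_{\ell_{p^*}^w(Y^* )}\}<\infty$. An operator $v:E\to F$ is absolutely $s$-summing if $(v(x_i))\in\ell_s(F)$ whenever $(x_i)\in\ell_s^w(E)$; $u$ is Cohen strongly $p$-summing if $(u(x_i))\in\ell_p\langle Y\rangle$ whenever $(x_i)\in\ell_p(X)$. *)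

theory Defs
  imports "HOL-Analysis.Analysis"
begin

text \<open>Rademacher functions. Sequences are indexed from 0, so index i here
corresponds to index i+1 in the paper: rademacher i t = r_(i+1)(t) = sign(sin(2^(i+1) pi t))
(up to the null set of dyadic points).\<close>
definition rademacher :: "nat \<Rightarrow> real \<Rightarrow> real" where
  "rademacher i t = (-1) ^ nat \<lfloor>2 ^ (i + 1) * t\<rfloor>"

definition conj_exp :: "real \<Rightarrow> ereal" where
  "conj_exp p = (if p = 1 then \<infinity> else ereal (p / (p - 1)))"

definition lp_in :: "ereal \<Rightarrow> (nat \<Rightarrow> real) \<Rightarrow> bool" where
  "lp_in s a = (if s = \<infinity> then bounded (range a)
                else summable (\<lambda>i. \<bar>a i\<bar> powr real_of_ereal s))"

definition lp_norm :: "ereal \<Rightarrow> (nat \<Rightarrow> real) \<Rightarrow> real" where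
  "lp_norm s a = (if s = \<infinity> then (SUP i. \<bar>a i\<bar>)
                  else (\<Sum>i. \<bar>a i\<bar> powr real_of_ereal s) powr (1 / real_of_ereal s))"

definition weak_lp :: "ereal \<Rightarrow> (nat \<Rightarrow> 'e::real_normed_vector) \<Rightarrow> bool" where
  "weak_lp s x = ((\<forall>\<phi>::'e \<Rightarrow>\<^sub>L real. lp_in s (\<lambda>i. blinfun_apply \<phi> (x i))) \<and>
     bdd_above {lp_norm s (\<lambda>i. blinfun_apply \<phi> (x i)) | \<phi>::'e \<Rightarrow>\<^sub>L real. norm \<phi> \<le> 1})"

definition weak_lp_norm :: "ereal \<Rightarrow> (nat \<Rightarrow> 'e::real_normed_vector) \<Rightarrow> real" where
  "weak_lp_norm s x = Sup {lp_norm s (\<lambda>i. blinfun_apply \<phi> (x i)) | \<phi>::'e \<Rightarrow>\<^sub>L real. norm \<phi> \<le> 1}"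

definition strong_lp :: "ereal \<Rightarrow> (nat \<Rightarrow> 'e::real_normed_vector) \<Rightarrow> bool" where
  "strong_lp s x = lp_in s (\<lambda>i. norm (x i))"

definition cohen_lp :: "real \<Rightarrow> (nat \<Rightarrow> 'b::real_normed_vector) \<Rightarrow> bool" where
  "cohen_lp p y =
     ((\<forall>ys::nat \<Rightarrow> ('b \<Rightarrow>\<^sub>L real). weak_lp (conj_exp p) ys \<and> weak_lp_norm (conj_exp p) ys \<le> 1 \<longrightarrow>
         summable (\<lambda>i. \<bar>blinfun_apply (ys i) (y i)\<bar>)) \<and>
      bdd_above {(\<Sum>i. \<bar>blinfun_apply (ys i) (y i)\<bar>) | ys::nat \<Rightarrow> ('b \<Rightarrow>\<^sub>L real).
                   weak_lp (conj_exp p) ys \<and> weak_lp_norm (conj_exp p) ys \<le> 1})"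

definition Rad :: "(nat \<Rightarrow> 'a::banach) set" where
  "Rad = {x. (AE t in lborel. t \<in> {0..1} \<longrightarrow> summable (\<lambda>i. rademacher i t *\<^sub>R x i)) \<and>
            (\<integral>\<^sup>+ t\<in>{0..1}. ennreal ((norm (\<Sum>i. rademacher i t *\<^sub>R x i))\<^sup>2) \<partial>lborel) < \<infinity>}"

definition has_type :: "real \<Rightarrow> 'a::real_normed_vector itself \<Rightarrow> bool" where
  "has_type p _ = (\<exists>C\<ge>0. \<forall>(m::nat) (x::nat \<Rightarrow> 'a).
      sqrt (LINT t:{0..1}|lborel. (norm (\<Sum>i<m. rademacher i t *\<^sub>R x i))\<^sup>2)
        \<le> C * (\<Sum>i<m. norm (x i) powr p) powr (1 / p))"

definition abs_summing :: "ereal \<Rightarrow> ('e::real_normed_vector \<Rightarrow> 'f::real_normed_vector) \<Rightarrow> bool" where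
  "abs_summing s v = (\<forall>x. weak_lp s x \<longrightarrow> strong_lp s (\<lambda>i. v (x i)))"

definition cohen_strongly_summing :: "real \<Rightarrow> ('a::real_normed_vector \<Rightarrow> 'b::real_normed_vector) \<Rightarrow> bool" where
  "cohen_strongly_summing p u = (\<forall>x. strong_lp (ereal p) x \<longrightarrow> cohen_lp p (\<lambda>i. u (x i)))"

definition adjoint_op :: "('a::real_normed_vector \<Rightarrow>\<^sub>L 'b::real_normed_vector) \<Rightarrow> ('b \<Rightarrow>\<^sub>L real) \<Rightarrow> ('a \<Rightarrow>\<^sub>L real)" where
  "adjoint_op u = (\<lambda>f. f o\<^sub>L u)"

end

(*
  Since X has type p, every sequence in l_p(X) belongs to Rad(X). Splitting [0,1] dyadically,
  the Rademacher functions r_0, ..., r_(n-1) become a uniformly distributed sign vector, so the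
  type inequality is a statement about averages over signs. Levy's reflection argument bounds
  the probability that some partial sum of a tail of the series is large by twice the probability
  for the full tail sum, hence by the type inequality; Borel-Cantelli then gives almost everywhere
  convergence, and Fatou's lemma square integrability. Thus u is Cohen strongly p-summing.

  For the adjoint, let y_0^*, y_1^*, ... be weakly p*-summable, rescaled into the unit ball, and
  b_i the norm of u^* y_i^*. Choosing unit vectors v_i with b_i <= 2 |y_i^*(u v_i)| and testing Cohen
  summability on (a_i v_i) shows that sum a_i b_i converges for every nonnegative a in l_p.
  By Landau's converse of Hoelder's inequality (proved with the Abel-Dini test sequences) b lies
  in l_p*, i.e. u^* is absolutely p*-summing.
*)

theory Submission
  imports Defs
begin

section \<open>Dyadic discretisation of the Rademacher functions\<close>

definition sign_vectors :: "nat \<Rightarrow> (nat \<Rightarrow> real) set" where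
  "sign_vectors n = (\<Pi>\<^sub>E i\<in>{..<n}. {-1, 1})"

definition rademacher_vector :: "nat \<Rightarrow> real \<Rightarrow> nat \<Rightarrow> real" where
  "rademacher_vector n t = (\<lambda>i\<in>{..<n}. rademacher i t)"

lemma rademacher_pm1: "rademacher i t \<in> {-1, 1}"
  unfolding rademacher_def by (metis insertCI neg_one_even_power neg_one_odd_power)

lemma rademacher_0_left_half: "0 \<le> t \<Longrightarrow> t < 1/2 \<Longrightarrow> rademacher 0 t = 1"
  by (simp add: rademacher_def floor_eq_iff)

lemma rademacher_0_right_half:
  assumes "1/2 \<le> t" and "t < 1"
  shows "rademacher 0 t = -1"
proof -
  from assms have "\<lfloor>2 * t\<rfloor> = 1" by (simp add: floor_eq_iff)
  then show ?thesis by (simp add: rademacher_def)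
qed

lemma rademacher_Suc: "rademacher (Suc i) t = rademacher i (2 * t)"
  by (simp add: rademacher_def mult.assoc)

text \<open>The hypothesis \<open>0 \<le> t\<close> is needed: \<open>nat\<close> truncates the negative floors.\<close>

lemma rademacher_periodic:
  assumes "0 \<le> t"
  shows "rademacher i (t + 1) = rademacher i t"
proof -
  have "(2::real) ^ (i + 1) * (t + 1) = 2 ^ (i + 1) * t + of_int (2 ^ (i + 1))"
    by (simp add: distrib_left)
  then have "\<lfloor>(2::real) ^ (i + 1) * (t + 1)\<rfloor> = \<lfloor>2 ^ (i + 1) * t\<rfloor> + 2 ^ (i + 1)"
    by (simp only: floor_add_int)
  moreover have "0 \<le> \<lfloor>(2::real) ^ (i + 1) * t\<rfloor>" using assms by simp
  ultimately have "nat \<lfloor>(2::real) ^ (i + 1) * (t + 1)\<rfloor> = nat \<lfloor>2 ^ (i + 1) * t\<rfloor> + 2 * 2 ^ i"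
    by (simp add: nat_add_distrib nat_mult_distrib nat_power_eq)
  then show ?thesis by (simp add: rademacher_def power_add)
qed

lemma rademacher_Suc_right_half: "1/2 \<le> t \<Longrightarrow> rademacher (Suc i) t = rademacher i (2 * t - 1)"
  using rademacher_periodic[of "2 * t - 1" i] by (simp add: rademacher_Suc)

lemma rademacher_vector_in_sign_vectors: "rademacher_vector n t \<in> sign_vectors n"
  using rademacher_pm1 by (simp add: rademacher_vector_def sign_vectors_def)

lemma rademacher_vector_apply: "i < n \<Longrightarrow> rademacher_vector n t i = rademacher i t"
  by (simp add: rademacher_vector_def)

lemma sum_rademacher_vector:
  "m \<le> n \<Longrightarrow> (\<Sum>i<m. rademacher_vector n t i *\<^sub>R x i) = (\<Sum>i<m. rademacher i t *\<^sub>R x i)"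
  by (intro sum.cong) (auto simp: rademacher_vector_apply)

lemma rademacher_vector_Suc_left_half:
  "0 \<le> t \<Longrightarrow> t < 1/2 \<Longrightarrow> rademacher_vector (Suc n) t = case_nat 1 (rademacher_vector n (2 * t))"
  by (auto simp: rademacher_vector_def fun_eq_iff rademacher_0_left_half rademacher_Suc
      split: nat.split)

lemma rademacher_vector_Suc_right_half:
  "1/2 \<le> t \<Longrightarrow> t < 1 \<Longrightarrow> rademacher_vector (Suc n) t = case_nat (-1) (rademacher_vector n (2 * t - 1))"
  by (auto simp: rademacher_vector_def fun_eq_iff rademacher_0_right_half
      rademacher_Suc_right_half split: nat.split)

lemma sign_vectors_Suc:
  "sign_vectors (Suc n) = case_nat 1 ` sign_vectors n \<union> case_nat (-1) ` sign_vectors n"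
proof
  show "sign_vectors (Suc n) \<subseteq> case_nat 1 ` sign_vectors n \<union> case_nat (-1) ` sign_vectors n"
  proof
    fix e assume e: "e \<in> sign_vectors (Suc n)"
    define e' where "e' = (\<lambda>i\<in>{..<n}. e (Suc i))"
    have "e' \<in> sign_vectors n" using e by (auto simp: sign_vectors_def e'_def)
    moreover have "e = case_nat (e 0) e'"
      using e by (auto simp: sign_vectors_def e'_def PiE_iff extensional_def fun_eq_iff split: nat.split)
    moreover have "e 0 \<in> {-1, 1}" using e by (auto simp: sign_vectors_def)
    ultimately show "e \<in> case_nat 1 ` sign_vectors n \<union> case_nat (-1) ` sign_vectors n" by auto
  qed
  have "case_nat a e \<in> sign_vectors (Suc n)" if "a \<in> {-1, 1}" "e \<in> sign_vectors n" for a e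
    using that by (auto simp: sign_vectors_def PiE_iff extensional_def split: nat.split)
  then show "case_nat 1 ` sign_vectors n \<union> case_nat (-1) ` sign_vectors n \<subseteq> sign_vectors (Suc n)"
    by auto
qed

lemma finite_sign_vectors: "finite (sign_vectors n)"
  by (simp add: sign_vectors_def finite_PiE)

lemma inj_case_nat: "inj (case_nat a)"
  by (rule injI) (metis nat.case(2) ext)

lemma sum_sign_vectors_Suc:
  "(\<Sum>e\<in>sign_vectors (Suc n). h e) =
     (\<Sum>e\<in>sign_vectors n. h (case_nat 1 e)) + (\<Sum>e\<in>sign_vectors n. h (case_nat (-1) e))"
proof -
  have "case_nat 1 ` sign_vectors n \<inter> case_nat (-1) ` sign_vectors n = {}"
    by (auto dest: fun_cong[where x=0])
  then show ?thesis
    unfolding sign_vectors_Suc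
    by (simp add: sum.union_disjoint finite_sign_vectors sum.reindex inj_case_nat[THEN inj_on_subset])
qed

lemma has_integral_rademacher_vector:
  fixes h :: "(nat \<Rightarrow> real) \<Rightarrow> real"
  shows "((\<lambda>t. h (rademacher_vector n t)) has_integral (\<Sum>e\<in>sign_vectors n. h e) / 2 ^ n) {0..1}"
proof (induction n arbitrary: h)
  case 0
  show ?case
    using has_integral_const_real[of "h (\<lambda>_. undefined)" 0 1]
    by (simp add: rademacher_vector_def sign_vectors_def)
next
  case (Suc n)
  txt \<open>On each half of [0,1] the first sign is constant and the remaining ones form the
    vector of length n at the doubled point.\<close>
  let ?I = "\<lambda>a. (\<Sum>e\<in>sign_vectors n. h (case_nat a e)) / 2 ^ n"
  have affine: "((\<lambda>t. h (case_nat a (rademacher_vector n (2 * t - c)))) has_integral ?I a / 2)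
      {c/2..(c+1)/2}" for a c
  proof -
    have "((\<lambda>s. h (case_nat a (rademacher_vector n s))) has_integral ?I a) (cbox 0 1)"
      using Suc.IH by simp
    from has_integral_affinity[OF this, of 2 "-c"]
    have "((\<lambda>t. h (case_nat a (rademacher_vector n (2 * t - c)))) has_integral ?I a / 2)
        ((\<lambda>x. (1/2) *\<^sub>R x + - ((1/2) *\<^sub>R - c)) ` cbox 0 1)"
      by (simp add: mult.commute)
    moreover have "(\<lambda>x::real. (1/2) *\<^sub>R x + - ((1/2) *\<^sub>R - c)) ` cbox 0 1 = {c/2..(c+1)/2}"
      by (auto simp: image_iff cbox_interval field_simps intro!: bexI[where x="2 * _ - c"])
    ultimately show ?thesis by simp
  qed
  have left: "((\<lambda>t. h (rademacher_vector (Suc n) t)) has_integral ?I 1 / 2) {0..1/2}"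
  proof (rule has_integral_spike_finite[of "{1/2}"])
    show "((\<lambda>t. h (case_nat 1 (rademacher_vector n (2 * t - 0)))) has_integral ?I 1 / 2) {0..1/2}"
      using affine[of 1 0] by simp
  qed (auto simp: rademacher_vector_Suc_left_half)
  have right: "((\<lambda>t. h (rademacher_vector (Suc n) t)) has_integral ?I (-1) / 2) {1/2..1}"
  proof (rule has_integral_spike_finite[of "{1}"])
    show "((\<lambda>t. h (case_nat (-1) (rademacher_vector n (2 * t - 1)))) has_integral ?I (-1) / 2)
        {1/2..1}"
      using affine[of "-1" 1] by simp
  qed (auto simp: rademacher_vector_Suc_right_half)
  have "((\<lambda>t. h (rademacher_vector (Suc n) t)) has_integral ?I 1 / 2 + ?I (-1) / 2) {0..1}"
    by (rule has_integral_combine[OF _ _ left right]) auto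
  then show ?case by (simp add: sum_sign_vectors_Suc add_divide_distrib mult.commute)
qed

lemma rademacher_measurable [measurable]: "rademacher i \<in> borel_measurable borel"
  unfolding rademacher_def[abs_def] by measurable

lemma rademacher_vector_measurable:
  "rademacher_vector n \<in> measurable borel (count_space (sign_vectors n))"
proof -
  have "rademacher_vector n -` {e} = {t. \<forall>i<n. rademacher i t = e i}" if "e \<in> sign_vectors n" for e
    using that by (auto simp: rademacher_vector_def sign_vectors_def PiE_iff extensional_def fun_eq_iff)
  then show ?thesis
    using rademacher_vector_in_sign_vectors
    by (subst measurable_count_space_eq_countable) (auto simp: finite_sign_vectors countable_finite)
qed

lemma borel_measurable_rademacher_vector:
  "(\<lambda>t. h (rademacher_vector n t)) \<in> borel_measurable borel"
  using measurable_compose[OF rademacher_vector_measurable borel_measurable_count_space] .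

lemma sets_rademacher_vector: "{t\<in>{0..1}. P (rademacher_vector n t)} \<in> sets lborel"
proof -
  have "{t. P (rademacher_vector n t)} \<in> sets borel"
    using measurable_compose[OF rademacher_vector_measurable measurable_count_space, of P]
    unfolding pred_def by simp
  moreover have "{t\<in>{0..1}. P (rademacher_vector n t)} = {0..1} \<inter> {t. P (rademacher_vector n t)}"
    by auto
  ultimately show ?thesis by simp
qed

lemma nn_integral_rademacher_vector:
  fixes h :: "(nat \<Rightarrow> real) \<Rightarrow> real"
  assumes "\<And>e. e \<in> sign_vectors n \<Longrightarrow> 0 \<le> h e"
  shows "(\<integral>\<^sup>+ t\<in>{0..1}. ennreal (h (rademacher_vector n t)) \<partial>lborel)
    = ennreal ((\<Sum>e\<in>sign_vectors n. h e) / 2 ^ n)"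
  using nn_integral_has_integral_lebesgue'[OF _ has_integral_rademacher_vector] assms
    rademacher_vector_in_sign_vectors
  by auto

lemma integral_rademacher_vector:
  fixes h :: "(nat \<Rightarrow> real) \<Rightarrow> real"
  assumes "\<And>e. e \<in> sign_vectors n \<Longrightarrow> 0 \<le> h e"
  shows "(LINT t:{0..1}|lborel. h (rademacher_vector n t)) = (\<Sum>e\<in>sign_vectors n. h e) / 2 ^ n"
proof -
  have "(LINT t:{0..1}|lborel. h (rademacher_vector n t))
      = enn2real (\<integral>\<^sup>+ t\<in>{0..1}. ennreal (h (rademacher_vector n t)) \<partial>lborel)"
    unfolding set_lebesgue_integral_def
    using borel_measurable_rademacher_vector[of h n]
    by (subst integral_eq_nn_integral)
      (auto simp: indicator_def rademacher_vector_in_sign_vectors assms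
        intro!: arg_cong[where f=enn2real] nn_integral_cong)
  then show ?thesis
    by (simp add: nn_integral_rademacher_vector assms sum_nonneg)
qed

lemma emeasure_rademacher_vector:
  "emeasure lborel {t\<in>{0..1}. P (rademacher_vector n t)}
    = ennreal (card {e\<in>sign_vectors n. P e} / 2 ^ n)"
proof -
  have "emeasure lborel {t\<in>{0..1}. P (rademacher_vector n t)}
      = (\<integral>\<^sup>+ t\<in>{0..1}. ennreal (of_bool (P (rademacher_vector n t))) \<partial>lborel)"
    using sets_rademacher_vector
    by (auto simp: nn_integral_indicator[symmetric] indicator_def intro!: nn_integral_cong)
  also have "\<dots> = ennreal (card {e\<in>sign_vectors n. P e} / 2 ^ n)"
    by (subst nn_integral_rademacher_vector)
      (auto simp: of_bool_def sum.If_cases finite_sign_vectors Int_def conj_commute)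
  finally show ?thesis .
qed

definition rademacher_mean_square :: "nat \<Rightarrow> (nat \<Rightarrow> 'a::real_normed_vector) \<Rightarrow> real" where
  "rademacher_mean_square n x = (\<Sum>e\<in>sign_vectors n. (norm (\<Sum>i<n. e i *\<^sub>R x i))\<^sup>2) / 2 ^ n"

lemma nn_integral_rademacher_sum:
  "(\<integral>\<^sup>+ t\<in>{0..1}. ennreal ((norm (\<Sum>i<n. rademacher i t *\<^sub>R x i))\<^sup>2) \<partial>lborel)
    = ennreal (rademacher_mean_square n x)"
  using nn_integral_rademacher_vector[where h = "\<lambda>e. (norm (\<Sum>i<n. e i *\<^sub>R x i))\<^sup>2" and n = n]
  by (simp add: rademacher_mean_square_def sum_rademacher_vector)

lemma integral_rademacher_sum:
  "(LINT t:{0..1}|lborel. (norm (\<Sum>i<n. rademacher i t *\<^sub>R x i))\<^sup>2) = rademacher_mean_square n x"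
  using integral_rademacher_vector[where h = "\<lambda>e. (norm (\<Sum>i<n. e i *\<^sub>R x i))\<^sup>2" and n = n]
  by (simp add: rademacher_mean_square_def sum_rademacher_vector)

definition type_constant :: "real \<Rightarrow> real \<Rightarrow> 'a::real_normed_vector itself \<Rightarrow> bool" where
  "type_constant p C _ \<longleftrightarrow> C \<ge> 0 \<and> (\<forall>n (x :: nat \<Rightarrow> 'a).
     rademacher_mean_square n x \<le> (C * (\<Sum>i<n. norm (x i) powr p) powr (1 / p))\<^sup>2)"

lemma has_type_iff_type_constant:
  "has_type p TYPE('a::real_normed_vector) \<longleftrightarrow> (\<exists>C. type_constant p C TYPE('a))"
proof -
  have "sqrt (rademacher_mean_square n x) \<le> C * (\<Sum>i<n. norm (x i) powr p) powr (1 / p)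
      \<longleftrightarrow> rademacher_mean_square n x \<le> (C * (\<Sum>i<n. norm (x i) powr p) powr (1 / p))\<^sup>2"
    if "C \<ge> 0" for C n and x :: "nat \<Rightarrow> 'a"
    using that by (auto intro: real_le_lsqrt sqrt_le_D)
  then show ?thesis
    unfolding has_type_def type_constant_def integral_rademacher_sum by auto
qed

section \<open>Levy's inequality and almost everywhere convergence\<close>

lemma card_sign_vectors_gt_le_sum_squares:
  fixes s :: real
  assumes "s > 0"
  shows "real (card {e\<in>sign_vectors n. s < norm (F e)}) * s\<^sup>2 \<le> (\<Sum>e\<in>sign_vectors n. (norm (F e))\<^sup>2)"
proof -
  have "real (card {e\<in>sign_vectors n. s < norm (F e)}) * s\<^sup>2 = (\<Sum>e\<in>{e\<in>sign_vectors n. s < norm (F e)}. s\<^sup>2)"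
    by simp
  also have "\<dots> \<le> (\<Sum>e\<in>{e\<in>sign_vectors n. s < norm (F e)}. (norm (F e))\<^sup>2)"
    using assms by (intro sum_mono power_mono) auto
  also have "\<dots> \<le> (\<Sum>e\<in>sign_vectors n. (norm (F e))\<^sup>2)"
    by (intro sum_mono2) (auto simp: finite_sign_vectors)
  finally show ?thesis .
qed

definition reflect_from :: "nat \<Rightarrow> nat \<Rightarrow> (nat \<Rightarrow> real) \<Rightarrow> nat \<Rightarrow> real" where
  "reflect_from k n e i = (if k \<le> i \<and> i < n then - e i else e i)"

lemma reflect_from_in_sign_vectors: "e \<in> sign_vectors n \<Longrightarrow> reflect_from k n e \<in> sign_vectors n"
  by (auto simp: sign_vectors_def reflect_from_def PiE_iff extensional_def)

lemma reflect_from_reflect_from [simp]: "reflect_from k n (reflect_from k n e) = e"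
  by (simp add: reflect_from_def fun_eq_iff)

lemma sum_reflect_from_below:
  "j \<le> k \<Longrightarrow> (\<Sum>i<j. reflect_from k n e i *\<^sub>R x i) = (\<Sum>i<j. e i *\<^sub>R x i)"
  by (intro sum.cong) (auto simp: reflect_from_def)

lemma sum_add_sum_reflect_from:
  fixes x :: "nat \<Rightarrow> 'a::real_vector"
  assumes "k \<le> n"
  shows "(\<Sum>i<n. e i *\<^sub>R x i) + (\<Sum>i<n. reflect_from k n e i *\<^sub>R x i) = 2 *\<^sub>R (\<Sum>i<k. e i *\<^sub>R x i)"
proof -
  have split: "(\<Sum>i<n. g i *\<^sub>R x i) = (\<Sum>i<k. g i *\<^sub>R x i) + (\<Sum>i\<in>{k..<n}. g i *\<^sub>R x i)" for g
  proof -
    have "{..<n} = {..<k} \<union> {k..<n}" using assms by auto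
    then show ?thesis by (simp add: sum.union_disjoint ivl_disj_int)
  qed
  have "(\<Sum>i\<in>{k..<n}. reflect_from k n e i *\<^sub>R x i) = - (\<Sum>i\<in>{k..<n}. e i *\<^sub>R x i)"
    by (simp add: reflect_from_def sum_negf)
  then show ?thesis
    using split[of e] split[of "reflect_from k n e"] sum_reflect_from_below[of k k n e x]
    by (simp add: scaleR_2)
qed

lemma levy_inequality_sign_vectors:
  fixes x :: "nat \<Rightarrow> 'a::real_normed_vector"
  shows "card {e\<in>sign_vectors n. \<exists>j\<le>n. s < norm (\<Sum>i<j. e i *\<^sub>R x i)}
    \<le> 2 * card {e\<in>sign_vectors n. s < norm (\<Sum>i<n. e i *\<^sub>R x i)}"
proof -
  define P where "P j e = (\<Sum>i<j. e i *\<^sub>R x i)" for j e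
  define A where "A = {e\<in>sign_vectors n. \<exists>j\<le>n. s < norm (P j e)}"
  define B where "B = {e\<in>sign_vectors n. s < norm (P n e)}"
  define k where "k e = (LEAST j. j \<le> n \<and> s < norm (P j e))" for e
  txt \<open>Reflecting the signs after the first index k at which the partial sum exceeds s
    preserves A and k, and the two full sums add up to 2 P k e; so e or its reflection
    lies in B.\<close>
  define flip where "flip e = reflect_from (k e) n e" for e
  have k: "k e \<le> n" "s < norm (P (k e) e)" if "e \<in> A" for e
    using that LeastI_ex[of "\<lambda>j. j \<le> n \<and> s < norm (P j e)"] by (auto simp: A_def k_def)
  have below_k: "\<not> s < norm (P j e)" if "j < k e" "e \<in> A" for e j
    using that k[OF that(2)] not_less_Least[of j "\<lambda>j. j \<le> n \<and> s < norm (P j e)"]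
    by (auto simp: k_def)
  have P_flip: "P j (flip e) = P j e" if "j \<le> k e" for e j
    unfolding P_def flip_def using that by (rule sum_reflect_from_below)
  have flip_A: "flip e \<in> A" and k_flip: "k (flip e) = k e" if "e \<in> A" for e
  proof -
    show "flip e \<in> A"
      using that k[OF that] P_flip[of "k e" e]
      by (auto simp: A_def flip_def reflect_from_in_sign_vectors)
    show "k (flip e) = k e"
      unfolding k_def[of "flip e"]
    proof (rule Least_equality)
      show "k e \<le> n \<and> s < norm (P (k e) (flip e))" using k[OF that] P_flip[of "k e" e] by simp
      show "k e \<le> j" if "j \<le> n \<and> s < norm (P j (flip e))" for j
        using that below_k[of j e] P_flip[of j e] \<open>e \<in> A\<close> by (cases "j < k e") auto
    qed
  qed
  have "e \<in> B \<or> flip e \<in> B" if "e \<in> A" for e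
  proof (rule ccontr)
    assume "\<not> (e \<in> B \<or> flip e \<in> B)"
    then have "norm (P n e + P n (flip e)) \<le> 2 * s"
      using that flip_A[OF that] norm_triangle_ineq[of "P n e" "P n (flip e)"] by (auto simp: A_def B_def)
    then show False
      using sum_add_sum_reflect_from[OF k(1)[OF that], of e x] k(2)[OF that] by (simp add: P_def flip_def)
  qed
  then have "A \<subseteq> B \<union> flip ` B"
    using flip_A k_flip by (force simp: flip_def)
  moreover have "finite B" by (simp add: B_def finite_sign_vectors)
  ultimately have "card A \<le> card (B \<union> flip ` B)" by (intro card_mono) auto
  also have "\<dots> \<le> card B + card (flip ` B)" by (rule card_Un_le)
  also have "card (flip ` B) \<le> card B" by (rule card_image_le[OF \<open>finite B\<close>])
  finally show ?thesis by (simp add: A_def B_def P_def)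
qed

lemma max_rademacher_sum_eq_rademacher_vector:
  "{t\<in>{0..1}. \<exists>j\<le>n. s < norm (\<Sum>i<j. rademacher i t *\<^sub>R x i)}
    = {t\<in>{0..1}. \<exists>j\<le>n. s < norm (\<Sum>i<j. rademacher_vector n t i *\<^sub>R x i)}"
  by (auto simp: sum_rademacher_vector)

lemma sets_max_rademacher_sum:
  "{t\<in>{0..1}. \<exists>j\<le>n. s < norm (\<Sum>i<j. rademacher i t *\<^sub>R x i)} \<in> sets lborel"
  unfolding max_rademacher_sum_eq_rademacher_vector by (rule sets_rademacher_vector)

lemma emeasure_max_rademacher_sum_le:
  fixes x :: "nat \<Rightarrow> 'a::real_normed_vector"
  assumes "s > 0"
  shows "emeasure lborel {t\<in>{0..1}. \<exists>j\<le>n. s < norm (\<Sum>i<j. rademacher i t *\<^sub>R x i)}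
    \<le> ennreal (2 * rademacher_mean_square n x / s\<^sup>2)"
proof -
  let ?A = "{e\<in>sign_vectors n. \<exists>j\<le>n. s < norm (\<Sum>i<j. e i *\<^sub>R x i)}"
  let ?B = "{e\<in>sign_vectors n. s < norm (\<Sum>i<n. e i *\<^sub>R x i)}"
  have "emeasure lborel {t\<in>{0..1}. \<exists>j\<le>n. s < norm (\<Sum>i<j. rademacher i t *\<^sub>R x i)}
      = ennreal (card ?A / 2 ^ n)"
    unfolding max_rademacher_sum_eq_rademacher_vector by (rule emeasure_rademacher_vector)
  also have "card ?A / 2 ^ n \<le> 2 * card ?B / 2 ^ n"
    using levy_inequality_sign_vectors[of n s x] by (simp add: divide_right_mono)
  also have "\<dots> \<le> 2 * ((\<Sum>e\<in>sign_vectors n. (norm (\<Sum>i<n. e i *\<^sub>R x i))\<^sup>2) / s\<^sup>2) / 2 ^ n"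
    using card_sign_vectors_gt_le_sum_squares[OF assms, of n "\<lambda>e. \<Sum>i<n. e i *\<^sub>R x i"] assms
    by (intro divide_right_mono mult_left_mono) (auto simp: field_simps)
  finally show ?thesis by (simp add: rademacher_mean_square_def ennreal_leI mult.commute)
qed

lemma emeasure_sup_rademacher_sum_le:
  fixes x :: "nat \<Rightarrow> 'a::real_normed_vector"
  assumes "s > 0" and "\<And>n. rademacher_mean_square n x \<le> B"
  shows "emeasure lborel (\<Union>n. {t\<in>{0..1}. \<exists>j\<le>n. s < norm (\<Sum>i<j. rademacher i t *\<^sub>R x i)})
    \<le> ennreal (2 * B / s\<^sup>2)"
proof -
  let ?F = "\<lambda>n. {t\<in>{0..1}. \<exists>j\<le>n. s < norm (\<Sum>i<j. rademacher i t *\<^sub>R x i)}"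
  have "range ?F \<subseteq> sets lborel" by (rule image_subsetI, rule sets_max_rademacher_sum)
  moreover have "incseq ?F" unfolding incseq_def by (blast intro: order_trans)
  ultimately have "emeasure lborel (\<Union>n. ?F n) = (SUP n. emeasure lborel (?F n))"
    by (rule SUP_emeasure_incseq[symmetric])
  also have "\<dots> \<le> ennreal (2 * B / s\<^sup>2)"
  proof (rule SUP_least)
    show "emeasure lborel (?F n) \<le> ennreal (2 * B / s\<^sup>2)" for n
      using emeasure_max_rademacher_sum_le[OF assms(1), of n x] assms
      by (simp add: order_trans ennreal_leI divide_right_mono)
  qed
  finally show ?thesis .
qed

lemma sum_lessThan_if_ge:
  fixes m n :: nat
  shows "(\<Sum>i<n. if m \<le> i then f i else 0) = sum f {m..<n}"
proof -
  have "{m..<n} = {i\<in>{..<n}. m \<le> i}" by auto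
  then show ?thesis using sum.inter_filter[of "{..<n}" f "\<lambda>i. m \<le> i"] by simp
qed

lemma emeasure_tail_rademacher_sum_le:
  fixes x :: "nat \<Rightarrow> 'a::real_normed_vector"
  assumes "type_constant p C TYPE('a)" and "p > 0" and "s > 0"
    and "summable (\<lambda>i. norm (x i) powr p)"
  shows "emeasure lborel (\<Union>n. {t\<in>{0..1}. \<exists>j\<le>n.
      s < norm (\<Sum>i<j. rademacher i t *\<^sub>R (if m \<le> i then x i else 0))})
    \<le> ennreal (2 * (C * (\<Sum>i. norm (x (i + m)) powr p) powr (1 / p))\<^sup>2 / s\<^sup>2)"
proof (rule emeasure_sup_rademacher_sum_le[OF assms(3)])
  let ?a = "\<lambda>i. norm (x i) powr p"
  fix n
  have "(\<Sum>i<n. norm (if m \<le> i then x i else 0) powr p) = sum ?a {m..<n}"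
    by (simp add: sum_lessThan_if_ge[symmetric] if_distrib[of "\<lambda>v. norm v powr p"] cong: if_cong)
  also have "\<dots> \<le> (\<Sum>i. ?a (i + m))"
    using sum_le_suminf[OF summable_ignore_initial_segment[OF assms(4)], of "{..<n - m}" m]
    by (simp add: sum.atLeastLessThan_shift_0[of _ m] atLeast0LessThan add.commute comp_def)
  finally have "(\<Sum>i<n. norm (if m \<le> i then x i else 0) powr p) powr (1 / p) \<le> (\<Sum>i. ?a (i + m)) powr (1 / p)"
    using assms(2) by (intro powr_mono2) (auto intro: sum_nonneg)
  then show "rademacher_mean_square n (\<lambda>i. if m \<le> i then x i else 0)
      \<le> (C * (\<Sum>i. ?a (i + m)) powr (1 / p))\<^sup>2"
    using assms(1) unfolding type_constant_def
    by (meson mult_left_mono order_trans power_mono powr_ge_zero zero_le_mult_iff)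
qed

lemma summable_if_tail_sums_bounded:
  fixes f :: "nat \<Rightarrow> 'a::banach"
  assumes "g \<longlonglongrightarrow> 0"
    and tails: "\<And>k j. K \<le> k \<Longrightarrow> N k \<le> j \<Longrightarrow> norm (sum f {N k..<j}) \<le> g k"
  shows "summable f"
  unfolding summable_Cauchy
proof (intro allI impI)
  fix \<epsilon> :: real assume "\<epsilon> > 0"
  then have "eventually (\<lambda>k. K \<le> k \<and> g k < \<epsilon> / 2) sequentially"
    by (intro eventually_conj eventually_ge_at_top order_tendstoD(2)[OF assms(1)]) simp
  then obtain k where "K \<le> k" "g k < \<epsilon> / 2"
    by (auto simp: eventually_sequentially)
  have "norm (sum f {m..<n}) < \<epsilon>" if "N k \<le> m" for m n
  proof (cases "m \<le> n")
    case True
    then have "N k \<le> n" using that by simp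
    have "norm (sum f {m..<n}) = norm (sum f {N k..<n} - sum f {N k..<m})"
      using sum_diff_nat_ivl[of "N k" m n f] that True by simp
    also have "\<dots> \<le> norm (sum f {N k..<n}) + norm (sum f {N k..<m})"
      by (rule norm_triangle_ineq4)
    also have "\<dots> \<le> g k + g k"
      using tails[OF \<open>K \<le> k\<close> \<open>N k \<le> n\<close>] tails[OF \<open>K \<le> k\<close> that] by (rule add_mono)
    finally have "norm (sum f {m..<n}) \<le> g k + g k" .
    then show ?thesis using \<open>g k < \<epsilon> / 2\<close> by simp
  qed (use \<open>\<epsilon> > 0\<close> in simp)
  then show "\<exists>M. \<forall>m\<ge>M. \<forall>n. norm (sum f {m..<n}) < \<epsilon>" by blast
qed

lemma AE_summable_rademacher_series:
  fixes x :: "nat \<Rightarrow> 'a::banach"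
  assumes "type_constant p C TYPE('a)" and "p > 0" and "summable (\<lambda>i. norm (x i) powr p)"
  shows "AE t in lborel. t \<in> {0..1} \<longrightarrow> summable (\<lambda>i. rademacher i t *\<^sub>R x i)"
proof -
  define T where "T m = (C * (\<Sum>i. norm (x (i + m)) powr p) powr (1 / p))\<^sup>2" for m
  have "(\<lambda>m. (\<Sum>i. norm (x (i + m)) powr p) powr (1 / p)) \<longlonglongrightarrow> 0"
    using assms(2,3)
    by (intro tendsto_zero_powrI[where b = "1 / p"] suminf_exist_split2 always_eventually tendsto_const)
      (auto intro!: suminf_nonneg summable_ignore_initial_segment)
  then have "(\<lambda>m. (C * (\<Sum>i. norm (x (i + m)) powr p) powr (1 / p))\<^sup>2) \<longlonglongrightarrow> (C * 0)\<^sup>2"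
    by (intro tendsto_power tendsto_mult_left)
  then have "T \<longlonglongrightarrow> 0" by (simp add: T_def[abs_def])
  have "\<exists>m. 2 * T m / ((1/2) ^ k)\<^sup>2 < (1/2) ^ k" for k
  proof -
    have "(\<lambda>m. 2 * T m / ((1/2) ^ k)\<^sup>2) \<longlonglongrightarrow> 0"
      by (intro tendsto_divide_zero tendsto_mult_right_zero \<open>T \<longlonglongrightarrow> 0\<close>)
    from order_tendstoD(2)[OF this, of "(1/2) ^ k"] show ?thesis
      by (auto simp: eventually_sequentially)
  qed
  then obtain N where N: "\<And>k. 2 * T (N k) / ((1/2) ^ k)\<^sup>2 < (1/2) ^ k" by metis
  txt \<open>Borel-Cantelli for the events that a partial sum of the tail beyond N k leaves the ball
    of radius 2^-k.\<close>
  define E where "E k = (\<Union>n. {t\<in>{0..1}. \<exists>j\<le>n.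
      (1/2) ^ k < norm (\<Sum>i<j. rademacher i t *\<^sub>R (if N k \<le> i then x i else 0))})" for k
  have E_sets: "E k \<in> sets lborel" for k
    unfolding E_def by (rule sets.countable_UN, rule image_subsetI, rule sets_max_rademacher_sum)
  have E_bound: "emeasure lborel (E k) \<le> ennreal ((1/2) ^ k)" for k
    using emeasure_tail_rademacher_sum_le[OF assms(1,2), of "(1/2) ^ k" x "N k"] assms(3) N[of k]
    unfolding E_def T_def by (simp add: order_trans ennreal_leI)
  have "summable (\<lambda>k. measure lborel (E k))"
    by (rule summable_comparison_test'[where g = "\<lambda>k. (1/2) ^ k"])
      (use E_bound in \<open>auto simp: measure_def enn2real_leI\<close>)
  moreover have "emeasure lborel (E k) < \<infinity>" for k
    using E_bound[of k] by (simp add: order_le_less_trans)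
  ultimately have "AE t in lborel. eventually (\<lambda>k. t \<notin> E k) sequentially"
    using borel_cantelli_AE1[OF E_sets] by simp
  moreover have "summable (\<lambda>i. rademacher i t *\<^sub>R x i)"
    if "t \<in> {0..1}" and "eventually (\<lambda>k. t \<notin> E k) sequentially" for t
  proof -
    obtain K where K: "\<And>k. K \<le> k \<Longrightarrow> t \<notin> E k"
      using \<open>eventually (\<lambda>k. t \<notin> E k) sequentially\<close> by (auto simp: eventually_sequentially)
    show ?thesis
    proof (rule summable_if_tail_sums_bounded[where g = "\<lambda>k. (1/2) ^ k"])
      show "(\<lambda>k. (1/2::real) ^ k) \<longlonglongrightarrow> 0" by (simp add: LIMSEQ_realpow_zero)
      show "norm (\<Sum>i\<in>{N k..<j}. rademacher i t *\<^sub>R x i) \<le> (1/2) ^ k" if "K \<le> k" for k j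
        using K[OF that] \<open>t \<in> {0..1}\<close>
        by (auto simp: E_def not_less if_distrib[of "scaleR _"] sum_lessThan_if_ge cong: if_cong)
    qed
  qed
  ultimately show ?thesis by (auto elim: AE_mp)
qed

lemma nn_integral_rademacher_series_le:
  fixes x :: "nat \<Rightarrow> 'a::banach"
  assumes summable_ae: "AE t in lborel. t \<in> {0..1} \<longrightarrow> summable (\<lambda>i. rademacher i t *\<^sub>R x i)"
    and "\<And>n. rademacher_mean_square n x \<le> B"
  shows "(\<integral>\<^sup>+ t\<in>{0..1}. ennreal ((norm (\<Sum>i. rademacher i t *\<^sub>R x i))\<^sup>2) \<partial>lborel)
    \<le> ennreal B"
proof -
  define S where "S t n = (\<Sum>i<n. rademacher i t *\<^sub>R x i)" for t n
  have S_measurable: "(\<lambda>t. ennreal ((norm (S t n))\<^sup>2) * indicator {0..1} t) \<in> borel_measurable lborel" for n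
  proof -
    have "(\<lambda>t. (norm (S t n))\<^sup>2) \<in> borel_measurable borel"
      using borel_measurable_rademacher_vector[where h = "\<lambda>e. (norm (\<Sum>i<n. e i *\<^sub>R x i))\<^sup>2" and n = n]
      by (simp add: S_def sum_rademacher_vector)
    then show ?thesis by measurable
  qed
  have "AE t in lborel. ennreal ((norm (\<Sum>i. rademacher i t *\<^sub>R x i))\<^sup>2) * indicator {0..1} t
      = liminf (\<lambda>n. ennreal ((norm (S t n))\<^sup>2) * indicator {0..1} t)"
    using summable_ae
  proof eventually_elim
    case (elim t)
    show ?case
    proof (cases "t \<in> {0..1}")
      case True
      then have "(\<lambda>n. S t n) \<longlonglongrightarrow> (\<Sum>i. rademacher i t *\<^sub>R x i)"
        using elim unfolding S_def by (intro summable_LIMSEQ) auto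
      then have "(\<lambda>n. ennreal ((norm (S t n))\<^sup>2))
          \<longlonglongrightarrow> ennreal ((norm (\<Sum>i. rademacher i t *\<^sub>R x i))\<^sup>2)"
        by (intro tendsto_ennrealI tendsto_power tendsto_norm)
      then have "liminf (\<lambda>n. ennreal ((norm (S t n))\<^sup>2)) = ennreal ((norm (\<Sum>i. rademacher i t *\<^sub>R x i))\<^sup>2)"
        by (intro lim_imp_Liminf) auto
      then show ?thesis using True by simp
    qed (simp add: Liminf_const)
  qed
  then have "(\<integral>\<^sup>+ t\<in>{0..1}. ennreal ((norm (\<Sum>i. rademacher i t *\<^sub>R x i))\<^sup>2) \<partial>lborel)
      = (\<integral>\<^sup>+ t. liminf (\<lambda>n. ennreal ((norm (S t n))\<^sup>2) * indicator {0..1} t) \<partial>lborel)"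
    by (rule nn_integral_cong_AE)
  also have "\<dots> \<le> liminf (\<lambda>n. \<integral>\<^sup>+ t\<in>{0..1}. ennreal ((norm (S t n))\<^sup>2) \<partial>lborel)"
    by (rule nn_integral_liminf[OF S_measurable])
  also have "\<dots> \<le> ennreal B"
    using assms(2)
    by (intro Liminf_le) (auto simp: S_def nn_integral_rademacher_sum intro!: always_eventually ennreal_leI)
  finally show ?thesis .
qed

lemma Rad_if_summable_powr_norm:
  fixes x :: "nat \<Rightarrow> 'a::banach"
  assumes "has_type p TYPE('a)" and "p > 0" and "summable (\<lambda>i. norm (x i) powr p)"
  shows "x \<in> Rad"
proof -
  obtain C where C: "type_constant p C TYPE('a)"
    using assms(1) has_type_iff_type_constant by blast
  have bound: "rademacher_mean_square n x \<le> (C * (\<Sum>i. norm (x i) powr p) powr (1 / p))\<^sup>2" for n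
  proof -
    have "(\<Sum>i<n. norm (x i) powr p) \<le> (\<Sum>i. norm (x i) powr p)"
      using assms(3) by (intro sum_le_suminf) auto
    then have "(\<Sum>i<n. norm (x i) powr p) powr (1 / p) \<le> (\<Sum>i. norm (x i) powr p) powr (1 / p)"
      using assms(2) by (intro powr_mono2) (auto intro: sum_nonneg)
    then show ?thesis
      using C unfolding type_constant_def
      by (meson mult_left_mono order_trans power_mono powr_ge_zero zero_le_mult_iff)
  qed
  have ae: "AE t in lborel. t \<in> {0..1} \<longrightarrow> summable (\<lambda>i. rademacher i t *\<^sub>R x i)"
    using AE_summable_rademacher_series[OF C assms(2,3)] .
  moreover have
    "(\<integral>\<^sup>+ t\<in>{0..1}. ennreal ((norm (\<Sum>i. rademacher i t *\<^sub>R x i))\<^sup>2) \<partial>lborel) < \<infinity>"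
    using nn_integral_rademacher_series_le[OF ae bound] by (rule order_le_less_trans) simp
  ultimately show ?thesis by (simp add: Rad_def)
qed

section \<open>Landau's converse of Hoelder's inequality\<close>

lemma diff_div_powr_le_powr_diff:
  fixes p x y :: real
  assumes "p > 1" and "0 < x" and "x \<le> y"
  shows "(y - x) / y powr p \<le> (x powr (1 - p) - y powr (1 - p)) / (p - 1)"
proof (cases "x = y")
  case False
  then have "x < y" using assms(3) by simp
  have "\<exists>z. x < z \<and> z < y \<and> y powr (1 - p) - x powr (1 - p) = (y - x) * ((1 - p) * z powr (1 - p - 1))"
    using assms(2)
    by (intro MVT2[where f = "\<lambda>t. t powr (1 - p)" and f' = "\<lambda>t. (1 - p) * t powr (1 - p - 1)", OF \<open>x < y\<close>])
      (metis has_real_derivative_powr less_le_trans)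
  then obtain z where z: "x < z" "z < y"
    and mvt: "y powr (1 - p) - x powr (1 - p) = (y - x) * ((1 - p) * z powr (1 - p - 1))"
    by blast
  have "(y - x) * y powr (- p) \<le> (y - x) * z powr (- p)"
    using z assms \<open>x < y\<close> by (intro mult_left_mono powr_mono2') auto
  also have "\<dots> = (x powr (1 - p) - y powr (1 - p)) / (p - 1)"
    using mvt assms(1) by (simp add: field_simps)
  finally show ?thesis by (simp add: powr_minus_divide)
qed simp

lemma summable_div_partial_sums_powr:
  fixes c :: "nat \<Rightarrow> real"
  assumes c: "\<And>i. 0 \<le> c i" and "p > 1"
  shows "summable (\<lambda>n. c n / (\<Sum>i<Suc n. c i) powr p)"
proof (cases "\<forall>n. c n = 0")
  case False
  define P where "P n = (\<Sum>i<n. c i)" for n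
  obtain m where "c m \<noteq> 0" using False by blast
  have P_mono: "P k \<le> P n" if "k \<le> n" for k n
    unfolding P_def using that c by (intro sum_mono2) auto
  have P_pos: "P n > 0" if "Suc m \<le> n" for n
  proof -
    have "0 < c m" using \<open>c m \<noteq> 0\<close> c[of m] by linarith
    then have "0 < P (Suc m)" unfolding P_def using c by (simp add: add_nonneg_pos sum_nonneg)
    then show ?thesis using P_mono[OF that] by simp
  qed
  have "convergent (\<lambda>n. P n powr (1 - p))"
  proof (rule Bseq_monoseq_convergent'_dec[where M = "Suc m"])
    show "Bseq (\<lambda>n. P (n + Suc m) powr (1 - p))"
      using P_pos P_mono \<open>p > 1\<close>
      by (intro BseqI'[where K = "P (Suc m) powr (1 - p)"]) (simp add: powr_mono2')
    show "P n powr (1 - p) \<le> P k powr (1 - p)" if "Suc m \<le> k" "k \<le> n" for k n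
      using P_pos P_mono that \<open>p > 1\<close> by (intro powr_mono2') auto
  qed
  then have "summable (\<lambda>n. (P n powr (1 - p) - P (Suc n) powr (1 - p)) / (p - 1))"
    by (intro summable_divide telescope_summable') (simp add: convergent_LIMSEQ_iff)
  then show ?thesis
  proof (rule summable_comparison_test'[where N = "Suc m"])
    fix n assume "Suc m \<le> n"
    have "c n / P (Suc n) powr p = (P (Suc n) - P n) / P (Suc n) powr p" by (simp add: P_def)
    also have "\<dots> \<le> (P n powr (1 - p) - P (Suc n) powr (1 - p)) / (p - 1)"
      using P_pos[OF \<open>Suc m \<le> n\<close>] P_mono[of n "Suc n"] \<open>p > 1\<close> by (intro diff_div_powr_le_powr_diff) auto
    finally show "norm (c n / (\<Sum>i<Suc n. c i) powr p)
        \<le> (P n powr (1 - p) - P (Suc n) powr (1 - p)) / (p - 1)"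
      using c[of n] by (simp add: P_def)
  qed
qed simp

lemma not_summable_div_partial_sums:
  fixes c :: "nat \<Rightarrow> real"
  assumes c: "\<And>i. 0 \<le> c i" and "\<not> summable c"
  shows "\<not> summable (\<lambda>n. c n / (\<Sum>i<Suc n. c i))"
proof
  define P where "P n = (\<Sum>i<n. c i)" for n
  assume "summable (\<lambda>n. c n / (\<Sum>i<Suc n. c i))"
  then obtain M where M: "\<And>m n. m \<ge> M \<Longrightarrow> norm (\<Sum>i\<in>{m..<n}. c i / P (Suc i)) < 1/2"
    unfolding summable_Cauchy P_def by (meson half_gt_zero_iff zero_less_one)
  have P_mono: "P k \<le> P n" if "k \<le> n" for k n
    unfolding P_def using that c by (intro sum_mono2) auto
  have P_unbounded: "\<exists>n. z < P n" for z
    using summableI_nonneg_bounded[of c z] c \<open>\<not> summable c\<close> by (force simp: P_def not_less)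
  obtain m0 where "0 < P m0" using P_unbounded by blast
  define m where "m = max M m0"
  have "0 < P m" using P_mono[of m0 m] \<open>0 < P m0\<close> by (simp add: m_def)
  obtain n where n: "2 * P m < P n" using P_unbounded by blast
  then have "m \<le> n" using P_mono[of n m] \<open>0 < P m\<close> by (cases "m \<le> n") auto
  have "(P n - P m) / P n = (\<Sum>i\<in>{m..<n}. c i / P n)"
    using sum_diff_nat_ivl[of 0 m n c] \<open>m \<le> n\<close> by (simp add: P_def atLeast0LessThan sum_divide_distrib)
  also have "\<dots> \<le> (\<Sum>i\<in>{m..<n}. c i / P (Suc i))"
  proof (rule sum_mono)
    fix i assume "i \<in> {m..<n}"
    then have "0 < P (Suc i)" "P (Suc i) \<le> P n"
      using P_mono[of m "Suc i"] P_mono[of "Suc i" n] \<open>0 < P m\<close> by auto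
    then show "c i / P n \<le> c i / P (Suc i)" using c[of i] by (intro divide_left_mono) auto
  qed
  also have "\<dots> < 1/2" using M[of m n] by (simp add: m_def)
  finally show False using n \<open>0 < P m\<close> by (simp add: field_simps)
qed

lemma summable_conj_powr_if_summable_products:
  fixes b :: "nat \<Rightarrow> real"
  assumes "p > 1" and b: "\<And>i. 0 \<le> b i"
    and products: "\<And>a. (\<And>i. 0 \<le> a i) \<Longrightarrow> summable (\<lambda>i. a i powr p)
      \<Longrightarrow> summable (\<lambda>i. a i * b i)"
  shows "summable (\<lambda>i. b i powr (p / (p - 1)))"
proof (rule ccontr)
  define q where "q = p / (p - 1)"
  define c where "c i = b i powr q" for i
  define a where "a n = b n powr (q - 1) / (\<Sum>i<Suc n. c i)" for n
  assume "\<not> summable (\<lambda>i. b i powr (p / (p - 1)))"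
  then have "\<not> summable c" by (simp add: c_def[abs_def] q_def)
  have c_nonneg: "0 \<le> c i" for i by (simp add: c_def)
  have "(q - 1) * p = q" using \<open>p > 1\<close> by (simp add: q_def field_simps)
  then have "a n powr p = c n / (\<Sum>i<Suc n. c i) powr p" for n
    using b c_nonneg by (simp add: a_def c_def powr_divide sum_nonneg powr_powr)
  then have "summable (\<lambda>n. a n powr p)"
    using summable_div_partial_sums_powr[OF c_nonneg \<open>p > 1\<close>] by simp
  moreover have "0 \<le> a n" for n using c_nonneg by (simp add: a_def sum_nonneg)
  ultimately have "summable (\<lambda>n. a n * b n)" by (rule products[rotated])
  moreover have "a n * b n = c n / (\<Sum>i<Suc n. c i)" for n
  proof (cases "b n = 0")
    case False
    then have "b n powr (q - 1) * b n = b n powr q"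
      using powr_mult_base[of "b n" "q - 1"] b[of n] by (simp add: mult.commute)
    then show ?thesis by (simp add: a_def c_def)
  qed (simp add: a_def c_def)
  ultimately show False
    using not_summable_div_partial_sums[OF c_nonneg \<open>\<not> summable c\<close>] by simp
qed

section \<open>Weakly summable sequences of functionals and the adjoint\<close>

lemma lp_norm_zero [simp]: "lp_norm s (\<lambda>_. 0) = 0"
  by (simp add: lp_norm_def)

lemma abs_le_lp_norm:
  assumes "0 < s" and "lp_in s a"
  shows "\<bar>a i\<bar> \<le> lp_norm s a"
proof (cases s)
  case (real r)
  then have "r > 0" and sum: "summable (\<lambda>i. \<bar>a i\<bar> powr r)" using assms by (auto simp: lp_in_def)
  have "\<bar>a i\<bar> powr r \<le> (\<Sum>i. \<bar>a i\<bar> powr r)"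
    using sum_le_suminf[OF sum, of "{i}"] by simp
  then have "(\<bar>a i\<bar> powr r) powr (1 / r) \<le> (\<Sum>i. \<bar>a i\<bar> powr r) powr (1 / r)"
    using \<open>r > 0\<close> by (intro powr_mono2) auto
  then show ?thesis using \<open>r > 0\<close> real by (simp add: lp_norm_def powr_powr)
next
  case PInf
  then have "bdd_above (range (\<lambda>i. \<bar>a i\<bar>))"
    using assms(2) by (auto simp: lp_in_def bounded_iff bdd_above_def)
  then show ?thesis using PInf cSUP_upper[OF UNIV_I] by (simp add: lp_norm_def)
qed (use assms in simp)

lemma lp_norm_le_weak_lp_norm:
  assumes "weak_lp s x" and "norm \<phi> \<le> 1"
  shows "lp_norm s (\<lambda>i. blinfun_apply \<phi> (x i)) \<le> weak_lp_norm s x"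
  unfolding weak_lp_norm_def using assms by (intro cSup_upper) (auto simp: weak_lp_def)

lemma weak_lp_norm_nonneg: "weak_lp s x \<Longrightarrow> 0 \<le> weak_lp_norm s x"
  using lp_norm_le_weak_lp_norm[of s x 0] by simp

lemma norm_le_weak_lp_norm:
  fixes ys :: "nat \<Rightarrow> ('b::real_normed_vector \<Rightarrow>\<^sub>L real)"
  assumes "weak_lp s ys" and "0 < s"
  shows "norm (ys i) \<le> weak_lp_norm s ys"
proof (rule norm_blinfun_bound)
  show "0 \<le> weak_lp_norm s ys" using assms(1) by (rule weak_lp_norm_nonneg)
  show "norm (ys i y) \<le> weak_lp_norm s ys * norm y" for y
  proof (cases "y = 0")
    case False
    define y1 where "y1 = y /\<^sub>R norm y"
    define ev where "ev = Blinfun (\<lambda>f :: 'b \<Rightarrow>\<^sub>L real. f y1)"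
    have ev_apply: "ev f = f y1" for f
      unfolding ev_def
      by (simp add: bounded_linear_Blinfun_apply bounded_bilinear.bounded_linear_left[OF bounded_bilinear_blinfun_apply])
    have "norm ev \<le> 1"
    proof (rule norm_blinfun_bound)
      show "norm (ev f) \<le> 1 * norm f" for f
        using norm_blinfun[of f y1] False by (simp add: ev_apply y1_def)
    qed simp
    have "lp_in s (\<lambda>j. ev (ys j))" using assms(1) by (simp add: weak_lp_def)
    then have "\<bar>ev (ys i)\<bar> \<le> lp_norm s (\<lambda>j. ev (ys j))" by (rule abs_le_lp_norm[OF assms(2)])
    also have "\<dots> \<le> weak_lp_norm s ys" by (rule lp_norm_le_weak_lp_norm[OF assms(1) \<open>norm ev \<le> 1\<close>])
    finally have "\<bar>ys i y1\<bar> \<le> weak_lp_norm s ys" by (simp add: ev_apply)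
    moreover have "ys i y = norm y * ys i y1"
      using False by (simp add: y1_def blinfun.scaleR_right)
    ultimately show ?thesis by (simp add: abs_mult mult.commute mult_left_mono)
  qed simp
qed

lemma lp_scale:
  assumes "lp_in (ereal r) a" and "r > 0" and "c \<ge> 0"
  shows "lp_in (ereal r) (\<lambda>i. c * a i)" and "lp_norm (ereal r) (\<lambda>i. c * a i) = c * lp_norm (ereal r) a"
proof -
  have sum: "summable (\<lambda>i. \<bar>a i\<bar> powr r)" using assms(1) by (simp add: lp_in_def)
  have scale: "\<bar>c * a i\<bar> powr r = c powr r * \<bar>a i\<bar> powr r" for i
    using assms(3) by (simp add: abs_mult powr_mult)
  show "lp_in (ereal r) (\<lambda>i. c * a i)"
    using summable_mult[OF sum] by (simp add: lp_in_def scale)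
  have "(c powr r * (\<Sum>i. \<bar>a i\<bar> powr r)) powr (1 / r) = c * (\<Sum>i. \<bar>a i\<bar> powr r) powr (1 / r)"
    using assms(2,3) suminf_nonneg[OF sum] by (simp add: powr_mult powr_powr)
  then show "lp_norm (ereal r) (\<lambda>i. c * a i) = c * lp_norm (ereal r) a"
    using suminf_mult[OF sum] by (simp add: lp_norm_def scale)
qed

lemma weak_lp_scaleR:
  fixes ys :: "nat \<Rightarrow> 'e::real_normed_vector"
  assumes "weak_lp (ereal r) ys" and "r > 0" and "c \<ge> 0"
  shows "weak_lp (ereal r) (\<lambda>i. c *\<^sub>R ys i)"
    and "weak_lp_norm (ereal r) (\<lambda>i. c *\<^sub>R ys i) \<le> c * weak_lp_norm (ereal r) ys"
proof -
  have lp: "lp_in (ereal r) (\<lambda>i. \<phi> (ys i))" for \<phi> :: "'e \<Rightarrow>\<^sub>L real"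
    using assms(1) by (simp add: weak_lp_def)
  have apply_scaleR: "\<phi> (c *\<^sub>R ys i) = c * \<phi> (ys i)" for \<phi> :: "'e \<Rightarrow>\<^sub>L real" and i
    by (simp add: blinfun.scaleR_right)
  note scaled = lp_scale[OF lp assms(2,3), folded apply_scaleR]
  have bound: "lp_norm (ereal r) (\<lambda>i. \<phi> (c *\<^sub>R ys i)) \<le> c * weak_lp_norm (ereal r) ys"
    if "norm \<phi> \<le> 1" for \<phi> :: "'e \<Rightarrow>\<^sub>L real"
    using lp_norm_le_weak_lp_norm[OF assms(1) that] assms(3) by (simp add: scaled mult_left_mono)
  then show "weak_lp (ereal r) (\<lambda>i. c *\<^sub>R ys i)"
    unfolding weak_lp_def using scaled by (auto simp: bdd_above_def)
  have "weak_lp_norm (ereal r) (\<lambda>i. c *\<^sub>R ys i)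
      = Sup {lp_norm (ereal r) (\<lambda>i. blinfun_apply \<phi> (c *\<^sub>R ys i)) |
          \<phi>::'e \<Rightarrow>\<^sub>L real. norm \<phi> \<le> 1}"
    by (simp only: weak_lp_norm_def)
  also have "\<dots> \<le> c * weak_lp_norm (ereal r) ys"
    using bound by (intro cSup_least) (auto intro: exI[of _ 0])
  finally show "weak_lp_norm (ereal r) (\<lambda>i. c *\<^sub>R ys i) \<le> c * weak_lp_norm (ereal r) ys" .
qed

lemma norm_blinfun_le_twice_norm_apply:
  fixes f :: "'a::real_normed_vector \<Rightarrow>\<^sub>L 'b::real_normed_vector"
  shows "\<exists>v. norm v \<le> 1 \<and> norm f \<le> 2 * norm (f v)"
proof (rule ccontr)
  assume "\<nexists>v. norm v \<le> 1 \<and> norm f \<le> 2 * norm (f v)"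
  then have small: "2 * norm (f v) < norm f" if "norm v \<le> 1" for v
    using that by (meson not_le)
  have "norm f \<le> norm f / 2"
  proof (rule norm_blinfun_bound)
    show "norm (f x) \<le> norm f / 2 * norm x" for x
    proof (cases "x = 0")
      case False
      have "f x = norm x *\<^sub>R f (x /\<^sub>R norm x)"
        using False by (simp add: blinfun.scaleR_right)
      then show ?thesis
        using small[of "x /\<^sub>R norm x"] False by (simp add: mult_left_mono)
    qed simp
  qed simp
  then show False using small[of 0] by simp
qed

lemma abs_summing_infinity_adjoint_op:
  fixes u :: "'a::real_normed_vector \<Rightarrow>\<^sub>L 'b::real_normed_vector"
  shows "abs_summing \<infinity> (adjoint_op u)"
  unfolding abs_summing_def
proof (intro allI impI)
  fix ys :: "nat \<Rightarrow> 'b \<Rightarrow>\<^sub>L real" assume "weak_lp \<infinity> ys"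
  have "norm (adjoint_op u (ys i)) \<le> weak_lp_norm \<infinity> ys * norm u" for i
    using norm_blinfun_compose[of "ys i" u] norm_le_weak_lp_norm[OF \<open>weak_lp \<infinity> ys\<close>, of i]
    by (simp add: adjoint_op_def order_trans mult_right_mono)
  then show "strong_lp \<infinity> (\<lambda>i. adjoint_op u (ys i))"
    by (auto simp: strong_lp_def lp_in_def bounded_iff)
qed

lemma summable_mult_norm_adjoint_op:
  fixes u :: "'a::real_normed_vector \<Rightarrow>\<^sub>L 'b::real_normed_vector"
  assumes "cohen_strongly_summing p (blinfun_apply u)" and "0 \<le> p"
    and "weak_lp (conj_exp p) ys" and "weak_lp_norm (conj_exp p) ys \<le> 1"
    and a: "\<And>i. 0 \<le> a i" "summable (\<lambda>i. a i powr p)"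
  shows "summable (\<lambda>i. a i * norm (adjoint_op u (ys i)))"
proof -
  obtain v where v: "\<And>i. norm (v i) \<le> 1" "\<And>i. norm (adjoint_op u (ys i)) \<le> 2 * \<bar>ys i (u (v i))\<bar>"
    using norm_blinfun_le_twice_norm_apply[of "adjoint_op u (ys _)"]
    by (metis adjoint_op_def blinfun_apply_blinfun_compose real_norm_def)
  have "norm (a i *\<^sub>R v i) \<le> a i" for i
    using v(1)[of i] a(1)[of i] by (simp add: mult_left_le)
  then have "strong_lp (ereal p) (\<lambda>i. a i *\<^sub>R v i)"
    unfolding strong_lp_def lp_in_def using a \<open>0 \<le> p\<close>
    by (auto intro!: summable_comparison_test'[OF a(2)] powr_mono2)
  then have "cohen_lp p (\<lambda>i. u (a i *\<^sub>R v i))"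
    using assms(1) by (simp add: cohen_strongly_summing_def)
  then have "summable (\<lambda>i. \<bar>ys i (u (a i *\<^sub>R v i))\<bar>)"
    using assms(3,4) unfolding cohen_lp_def by simp
  then have "summable (\<lambda>i. 2 * \<bar>ys i (u (a i *\<^sub>R v i))\<bar>)"
    by (rule summable_mult)
  then show ?thesis
  proof (rule summable_comparison_test'[where N = 0])
    fix i
    have "a i * norm (adjoint_op u (ys i)) \<le> a i * (2 * \<bar>ys i (u (v i))\<bar>)"
      using v(2) a(1) by (intro mult_left_mono)
    then show "norm (a i * norm (adjoint_op u (ys i))) \<le> 2 * \<bar>ys i (u (a i *\<^sub>R v i))\<bar>"
      using a(1)[of i] by (simp add: blinfun.scaleR_right abs_mult)
  qed
qed

lemma abs_summing_adjoint_op_if_cohen_strongly_summing: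
  fixes u :: "'a::real_normed_vector \<Rightarrow>\<^sub>L 'b::real_normed_vector"
  assumes "1 \<le> p" and cohen: "cohen_strongly_summing p (blinfun_apply u)"
  shows "abs_summing (conj_exp p) (adjoint_op u)"
proof (cases "p = 1")
  case True
  then show ?thesis by (simp add: conj_exp_def abs_summing_infinity_adjoint_op)
next
  case False
  then have "p > 1" using assms(1) by simp
  define q where "q = p / (p - 1)"
  have "q > 0" and q: "conj_exp p = ereal q" using \<open>p > 1\<close> False by (auto simp: q_def conj_exp_def)
  show ?thesis
    unfolding abs_summing_def q
  proof (intro allI impI)
    fix ys :: "nat \<Rightarrow> 'b \<Rightarrow>\<^sub>L real" assume ys: "weak_lp (ereal q) ys"
    txt \<open>Cohen summability only tests sequences in the unit ball of the weak space.\<close>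
    define c where "c = 1 / (weak_lp_norm (ereal q) ys + 1)"
    have "c > 0" "c * weak_lp_norm (ereal q) ys \<le> 1"
      using weak_lp_norm_nonneg[OF ys] by (auto simp: c_def field_simps)
    then have "weak_lp (ereal q) (\<lambda>i. c *\<^sub>R ys i)" "weak_lp_norm (ereal q) (\<lambda>i. c *\<^sub>R ys i) \<le> 1"
      using weak_lp_scaleR[OF ys \<open>q > 0\<close>, of c] by auto
    note scaled = summable_mult_norm_adjoint_op[OF cohen _ this[folded q]]
    have "norm (adjoint_op u (c *\<^sub>R ys i)) = c * norm (adjoint_op u (ys i))" for i
      using \<open>c > 0\<close> by (simp add: adjoint_op_def bounded_bilinear.scaleR_left[OF bounded_bilinear_blinfun_compose])
    then have "summable (\<lambda>i. a i * norm (adjoint_op u (ys i)))"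
      if "\<And>i. 0 \<le> a i" "summable (\<lambda>i. a i powr p)" for a
      using summable_mult[OF scaled[OF _ that], of "1 / c"] \<open>c > 0\<close> \<open>p > 1\<close> by (simp add: mult.left_commute)
    then have "summable (\<lambda>i. norm (adjoint_op u (ys i)) powr q)"
      unfolding q_def using \<open>p > 1\<close> by (intro summable_conj_powr_if_summable_products) auto
    then show "strong_lp (ereal q) (\<lambda>i. adjoint_op u (ys i))"
      by (simp add: strong_lp_def lp_in_def)
  qed
qed

theorem theorem2p4:
  fixes p :: real and u :: "'a::banach \<Rightarrow>\<^sub>L 'b::banach"
  assumes "1 \<le> p" and "p \<le> 2"
    and "has_type p TYPE('a)"
    and "\<forall>x \<in> (Rad :: (nat \<Rightarrow> 'a) set). cohen_lp p (\<lambda>i. blinfun_apply u (x i))"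
  shows "abs_summing (conj_exp p) (adjoint_op u) \<and> cohen_strongly_summing p (blinfun_apply u)"
proof -
  have "x \<in> Rad" if "strong_lp (ereal p) x" for x :: "nat \<Rightarrow> 'a"
    using that assms(1,3) by (intro Rad_if_summable_powr_norm) (auto simp: strong_lp_def lp_in_def)
  then have "cohen_strongly_summing p (blinfun_apply u)"
    using assms(4) by (simp add: cohen_strongly_summing_def)
  then show ?thesis
    using abs_summing_adjoint_op_if_cohen_strongly_summing[OF assms(1)] by simp
qed

end
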